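(* Let $\mathcal R$ be a left-linear TRS and $s,t,u$ terms. (1) If $t\leftarrow_{\mathcal R}s\to_{\mathcal R}u$ then there is a term $v$ with $t\,\nabla_s\,v$ and $v\,\nabla_s\,u$. (2) If $t\leftarrow_{\mathcal R}s\leftrightarrow_{\mathcal B}u$ then there is a term $v$ with $t\,\nabla_s\,v$ and $v\,\tilde\nabla_s\,u$.
   Context: Terms are built from a signature $\mathcal F$ and variables $\mathcal V$. A rule $\ell\to r$ is a pair of terms with $\ell\notin\mathcal V$ and $\mathrm{Var}(r)\subseteq\mathrm{Var}(\ell)$; a TRS is a set of rules, an ES a set of equations; a TRS is left-linear if no left-hand side contains a variable twice. For a set $\mathcal E$ of pairs of terms, $s\to_{\mathcal E}t$ iff $s|_p=\ell\sigma$ and $t=s[r\sigma]_p$ for some $(\ell,r)\in\mathcal E$, position $p$ and substitution $\sigma$; $\leftarrow_{\mathcal E}$ is its inverse and $\leftrightarrow_{\mathcal E}$ its symmetric closure. $\mathcal B$ is a fixed ES with $\mathrm{Var}(\ell)=\mathrm{Var}(r)$ for all $\ell\approx r\in\mathcal B$; $\sim_{\mathcal B}=\leftrightarrow^*_{\mathcal B}$ and $\mathcal B^\pm=\mathcal B\cup\{t\approx s\mid s\approx t\in\mathcal B\}$. For a TRS $\mathcal R$: $\downarrow_{\mathcal R}=\to^*_{\mathcal R}\cdot\leftarrow^*_{\mathcal R}$ and $s\downarrow^\sim_{\mathcal R}t$ iff $s\to^*_{\mathcal R}\cdot\sim_{\mathcal B}\cdot\leftarrow^*_{\mathcal R}t$.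 Critical pairs: for sets of oriented pairs $\mathcal R_1,\mathcal R_2$ (equations of $\mathcal B^\pm$ read as oriented pairs), an overlap is $\langle\ell_1\to r_1,p,\ell_2\to r_2\rangle$ with $\ell_i\to r_i$ variants of elements of $\mathcal R_i$ without common variables, $p$ a non-variable position of $\ell_2$, $\ell_1$ and $\ell_2|_p$ unifiable, and the two rules not variants of each other if $p=\epsilon$. With an mgu $\sigma$ this yields the critical peak $\ell_2\sigma[r_1\sigma]_p\leftarrow^p\ell_2\sigma\to^\epsilon r_2\sigma$ and critical pair $\ell_2\sigma[r_1\sigma]_p\approx r_2\sigma$. A critical peak $t\leftarrow^p s\to^\epsilon u$ is prime if all proper subterms of $s|_p$ are normal forms of $\to_{\mathcal R}$ (irreducibility is always checked w.r.t. $\mathcal R$, also for overlaps involving $\mathcal B^\pm$). $\mathrm{PCP}(\mathcal R)$ is the set of prime critical pairs from overlaps of $\mathcal R$ with itself; $\mathrm{PCP}^\pm(\mathcal R,\mathcal B^\pm)$ is the set of prime critical pairs from overlaps $\langle\rho_1,p,\rho_2\rangle$ with $\rho_1\in\mathcal R,\rho_2\in\mathcal B^\pm$ or $\rho_1\in\mathcal B^\pm,\rho_2\in\mathcal R$. Triangle notation: $t\,\nabla_s\,u$ iff $s\to^+_{\mathcal R}t$, $s\to^+_{\mathcal R}u$, and ($t\downarrow_{\mathcal R}u$ or $t\leftrightarrow_{\mathrm{PCP}(\mathcal R)}u$). $t\,\tilde\nabla_s\,u$ iff $s\to^+_{\mathcal R}t$, $s\sim_{\mathcal B}u$, and ($t\downarrow^\sim_{\mathcal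 R}u$ or $t\leftrightarrow_{\mathrm{PCP}^\pm(\mathcal R,\mathcal B^\pm)}u$). *)

theory Defs
  imports Main
begin

datatype ('f, 'v) "term" = is_Var: Var 'v | Fun 'f "('f, 'v) term list"

type_synonym pos = "nat list"

primrec subst_apply :: "('f, 'v) term \<Rightarrow> ('v \<Rightarrow> ('f, 'v) term) \<Rightarrow> ('f, 'v) term"
  (infixl "\<cdot>" 67) where
  "Var x \<cdot> \<sigma> = \<sigma> x"
| "Fun f ts \<cdot> \<sigma> = Fun f (map (\<lambda>t. t \<cdot> \<sigma>) ts)"

primrec vars_term :: "('f, 'v) term \<Rightarrow> 'v set" where
  "vars_term (Var x) = {x}"
| "vars_term (Fun f ts) = \<Union> (set (map vars_term ts))"

primrec in_poss :: "pos \<Rightarrow> ('f, 'v) term \<Rightarrow> bool" where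
  "in_poss [] t = True"
| "in_poss (i # p) t = (case t of Var _ \<Rightarrow> False
      | Fun f ts \<Rightarrow> i < length ts \<and> in_poss p (ts ! i))"

text \<open>Subterm at a position, s|_p (meaningful for positions of s).\<close>
primrec subt_at :: "('f, 'v) term \<Rightarrow> pos \<Rightarrow> ('f, 'v) term" where
  "subt_at t [] = t"
| "subt_at t (i # p) = (case t of Var x \<Rightarrow> Var x
      | Fun f ts \<Rightarrow> subt_at (ts ! i) p)"

text \<open>Replacement s[u]_p (meaningful for positions of s).\<close>
primrec replace_at :: "('f, 'v) term \<Rightarrow> pos \<Rightarrow> ('f, 'v) term \<Rightarrow> ('f, 'v) term" where
  "replace_at t [] u = u"
| "replace_at t (i # p) u = (case t of Var x \<Rightarrow> Var x
      | Fun f ts \<Rightarrow> Fun f (ts[i := replace_at (ts ! i) p u]))"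

definition fun_poss :: "pos \<Rightarrow> ('f, 'v) term \<Rightarrow> bool" where
  "fun_poss p t \<longleftrightarrow> in_poss p t \<and> \<not> is_Var (subt_at t p)"

type_synonym ('f, 'v) rule = "('f, 'v) term \<times> ('f, 'v) term"

definition wf_trs :: "('f, 'v) rule set \<Rightarrow> bool" where
  "wf_trs R \<longleftrightarrow> (\<forall>(l, r) \<in> R. \<not> is_Var l \<and> vars_term r \<subseteq> vars_term l)"

definition linear_term :: "('f, 'v) term \<Rightarrow> bool" where
  "linear_term t \<longleftrightarrow> (\<forall>p q x. in_poss p t \<and> in_poss q t \<and>
      subt_at t p = Var x \<and> subt_at t q = Var x \<longrightarrow> p = q)"

definition left_linear :: "('f, 'v) rule set \<Rightarrow> bool" where
  "left_linear R \<longleftrightarrow> (\<forall>(l, r) \<in> R. linear_term l)"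

definition var_balanced :: "('f, 'v) rule set \<Rightarrow> bool" where
  "var_balanced B \<longleftrightarrow> (\<forall>(l, r) \<in> B. vars_term l = vars_term r)"

definition rstep :: "('f, 'v) rule set \<Rightarrow> ('f, 'v) term rel" where
  "rstep E = {(s, t). \<exists>l r p \<sigma>. (l, r) \<in> E \<and> in_poss p s \<and>
      subt_at s p = l \<cdot> \<sigma> \<and> t = replace_at s p (r \<cdot> \<sigma>)}"

definition sym_step :: "('f, 'v) rule set \<Rightarrow> ('f, 'v) term rel" where
  "sym_step E = rstep E \<union> (rstep E)\<inverse>"

definition sym_es :: "('f, 'v) rule set \<Rightarrow> ('f, 'v) rule set" where
  "sym_es B = B \<union> {(t, s). (s, t) \<in> B}"

definition NF :: "('f, 'v) rule set \<Rightarrow> ('f, 'v) term set" where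
  "NF R = {t. \<not> (\<exists>u. (t, u) \<in> rstep R)}"

definition joinable :: "('f, 'v) rule set \<Rightarrow> ('f, 'v) term \<Rightarrow> ('f, 'v) term \<Rightarrow> bool" where
  "joinable R t u \<longleftrightarrow> (\<exists>w. (t, w) \<in> (rstep R)\<^sup>* \<and> (u, w) \<in> (rstep R)\<^sup>*)"

definition joinable_mod :: "('f, 'v) rule set \<Rightarrow> ('f, 'v) rule set \<Rightarrow>
    ('f, 'v) term \<Rightarrow> ('f, 'v) term \<Rightarrow> bool" where
  "joinable_mod R B t u \<longleftrightarrow> (\<exists>w1 w2. (t, w1) \<in> (rstep R)\<^sup>* \<and>
      (w1, w2) \<in> (sym_step B)\<^sup>* \<and> (u, w2) \<in> (rstep R)\<^sup>*)"

definition is_variant :: "('f, 'v) rule \<Rightarrow> ('f, 'v) rule \<Rightarrow> bool" where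
  "is_variant \<rho>' \<rho> \<longleftrightarrow> (\<exists>\<pi>. bij \<pi> \<and> fst \<rho>' = fst \<rho> \<cdot> (Var \<circ> \<pi>) \<and> snd \<rho>' = snd \<rho> \<cdot> (Var \<circ> \<pi>))"

definition vars_rule :: "('f, 'v) rule \<Rightarrow> 'v set" where
  "vars_rule \<rho> = vars_term (fst \<rho>) \<union> vars_term (snd \<rho>)"

definition is_mgu :: "('v \<Rightarrow> ('f, 'v) term) \<Rightarrow> ('f, 'v) term \<Rightarrow> ('f, 'v) term \<Rightarrow> bool" where
  "is_mgu \<sigma> s t \<longleftrightarrow> s \<cdot> \<sigma> = t \<cdot> \<sigma> \<and>
     (\<forall>\<tau>. s \<cdot> \<tau> = t \<cdot> \<tau> \<longrightarrow> (\<exists>\<delta>. \<forall>x. \<tau> x = \<sigma> x \<cdot> \<delta>))"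

definition overlap :: "('f, 'v) rule set \<Rightarrow> ('f, 'v) rule set \<Rightarrow>
    ('f, 'v) rule \<Rightarrow> pos \<Rightarrow> ('f, 'v) rule \<Rightarrow> bool" where
  "overlap R1 R2 \<rho>1 p \<rho>2 \<longleftrightarrow>
     (\<exists>\<rho>. \<rho> \<in> R1 \<and> is_variant \<rho>1 \<rho>) \<and> (\<exists>\<rho>. \<rho> \<in> R2 \<and> is_variant \<rho>2 \<rho>) \<and>
     vars_rule \<rho>1 \<inter> vars_rule \<rho>2 = {} \<and>
     fun_poss p (fst \<rho>2) \<and>
     (\<exists>\<sigma>. fst \<rho>1 \<cdot> \<sigma> = subt_at (fst \<rho>2) p \<cdot> \<sigma>) \<and>
     (p = [] \<longrightarrow> \<not> is_variant \<rho>1 \<rho>2)"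

text \<open>Prime critical pairs of overlaps \<open>\<langle>\<rho>\<^sub>1,p,\<rho>\<^sub>2\<rangle>\<close> with \<open>(\<rho>\<^sub>1,\<rho>\<^sub>2) \<in> \<R>\<^sub>1 \<times> \<R>\<^sub>2\<close>;
  primality (irreducibility) is checked w.r.t. the TRS \<open>R\<close>.\<close>
definition PCP_gen :: "('f, 'v) rule set \<Rightarrow> ('f, 'v) rule set \<Rightarrow> ('f, 'v) rule set \<Rightarrow>
    ('f, 'v) rule set" where
  "PCP_gen R R1 R2 = {(replace_at (fst \<rho>2 \<cdot> \<sigma>) p (snd \<rho>1 \<cdot> \<sigma>), snd \<rho>2 \<cdot> \<sigma>) | \<rho>1 p \<rho>2 \<sigma>.
      overlap R1 R2 \<rho>1 p \<rho>2 \<and> is_mgu \<sigma> (fst \<rho>1) (subt_at (fst \<rho>2) p) \<and>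
      (\<forall>q. in_poss q (fst \<rho>1 \<cdot> \<sigma>) \<and> q \<noteq> [] \<longrightarrow> subt_at (fst \<rho>1 \<cdot> \<sigma>) q \<in> NF R)}"

definition PCP :: "('f, 'v) rule set \<Rightarrow> ('f, 'v) rule set" where
  "PCP R = PCP_gen R R R"

definition PCP_pm :: "('f, 'v) rule set \<Rightarrow> ('f, 'v) rule set \<Rightarrow> ('f, 'v) rule set" where
  "PCP_pm R B = PCP_gen R R (sym_es B) \<union> PCP_gen R (sym_es B) R"

definition nabla :: "('f, 'v) rule set \<Rightarrow> ('f, 'v) term \<Rightarrow> ('f, 'v) term \<Rightarrow> ('f, 'v) term \<Rightarrow> bool" where
  "nabla R s t u \<longleftrightarrow> (s, t) \<in> (rstep R)\<^sup>+ \<and> (s, u) \<in> (rstep R)\<^sup>+ \<and>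
     (joinable R t u \<or> (t, u) \<in> sym_step (PCP R))"

definition nabla_tilde :: "('f, 'v) rule set \<Rightarrow> ('f, 'v) rule set \<Rightarrow>
    ('f, 'v) term \<Rightarrow> ('f, 'v) term \<Rightarrow> ('f, 'v) term \<Rightarrow> bool" where
  "nabla_tilde R B s t u \<longleftrightarrow> (s, t) \<in> (rstep R)\<^sup>+ \<and> (s, u) \<in> (sym_step B)\<^sup>* \<and>
     (joinable_mod R B t u \<or> (t, u) \<in> sym_step (PCP_pm R B))"

end

theory Submission
  imports Defs
begin

text \<open>Split the peak by the relative position of the two redexes.  Parallel steps commute.
  Otherwise one redex lies inside the other; contracting an innermost \<open>R\<close>-redex inside the inner
  one gives the intermediate term \<open>v\<close>, and both peaks formed with \<open>v\<close> are prime.  In a prime peak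
  the inner redex either lies below a variable of the outer rule, and rewriting every occurrence
  of that variable closes the peak with one more application of the outer rule, or it overlaps the
  outer rule at a function position; after renaming the rules apart and taking an mgu the peak is
  then an instance of a prime critical pair.  If the inner step is an equation step on an
  \<open>R\<close>-normal form there is no such innermost \<open>R\<close>-redex, and left-linearity closes the variable case.\<close>

section \<open>Terms, substitutions and positions\<close>

lemma subst_subst: "t \<cdot> \<sigma> \<cdot> \<delta> = t \<cdot> (\<lambda>x. \<sigma> x \<cdot> \<delta>)"
  by (induction t) auto

lemma term_subst_eq: "(\<And>x. x \<in> vars_term t \<Longrightarrow> \<sigma> x = \<tau> x) \<Longrightarrow> t \<cdot> \<sigma> = t \<cdot> \<tau>"
  by (induction t) auto

lemma term_subst_eq_rev: "t \<cdot> \<sigma> = t \<cdot> \<tau> \<Longrightarrow> x \<in> vars_term t \<Longrightarrow> \<sigma> x = \<tau> x"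
  by (induction t) auto

lemma subst_apply_Var [simp]: "t \<cdot> Var = t"
  by (induction t) (auto simp: map_idI)

lemma subst_apply_eq_comp: "(\<And>x. \<tau> x = \<sigma> x \<cdot> \<delta>) \<Longrightarrow> t \<cdot> \<tau> = t \<cdot> \<sigma> \<cdot> \<delta>"
  unfolding subst_subst by (rule term_subst_eq) simp

lemma finite_vars_term: "finite (vars_term t)"
  by (induction t) auto

lemma vars_term_subst: "vars_term (t \<cdot> \<sigma>) = (\<Union>y \<in> vars_term t. vars_term (\<sigma> y))"
  by (induction t) auto

lemma vars_term_rename: "vars_term (t \<cdot> (Var \<circ> \<pi>)) = \<pi> ` vars_term t"
  by (induction t) auto

lemma in_poss_Var [simp]: "in_poss q (Var x) \<longleftrightarrow> q = []"
  by (cases q) auto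

lemma in_poss_subst: "in_poss p t \<Longrightarrow> in_poss p (t \<cdot> \<sigma>)"
  by (induction p arbitrary: t) (auto split: term.splits)

lemma subt_at_subst: "in_poss p t \<Longrightarrow> subt_at (t \<cdot> \<sigma>) p = subt_at t p \<cdot> \<sigma>"
  by (induction p arbitrary: t) (auto split: term.splits)

lemma replace_at_subst:
  "in_poss p t \<Longrightarrow> replace_at t p u \<cdot> \<sigma> = replace_at (t \<cdot> \<sigma>) p (u \<cdot> \<sigma>)"
  by (induction p arbitrary: t) (auto split: term.splits simp: map_update)

lemma in_poss_append: "in_poss (p @ q) t \<longleftrightarrow> in_poss p t \<and> in_poss q (subt_at t p)"
  by (induction p arbitrary: t) (auto split: term.splits)

lemma subt_at_append: "in_poss p t \<Longrightarrow> subt_at t (p @ q) = subt_at (subt_at t p) q"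
  by (induction p arbitrary: t) (auto split: term.splits)

lemma replace_at_append:
  "in_poss p t \<Longrightarrow> replace_at t (p @ q) u = replace_at t p (replace_at (subt_at t p) q u)"
  by (induction p arbitrary: t) (auto split: term.splits)

lemma in_poss_replace_at: "in_poss p t \<Longrightarrow> in_poss p (replace_at t p u)"
  by (induction p arbitrary: t) (auto split: term.splits)

lemma subt_at_replace_at: "in_poss p t \<Longrightarrow> subt_at (replace_at t p u) p = u"
  by (induction p arbitrary: t) (auto split: term.splits)

lemma replace_at_replace_at:
  "in_poss p t \<Longrightarrow> replace_at (replace_at t p u) p w = replace_at t p w"
  by (induction p arbitrary: t) (auto split: term.splits)

lemma replace_at_subt_at: "in_poss p t \<Longrightarrow> replace_at t p (subt_at t p) = t"
  by (induction p arbitrary: t) (auto split: term.splits)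

lemma nested_pos:
  assumes "in_poss p s" "subt_at s p = a"
  shows "in_poss (p @ q) s \<longleftrightarrow> in_poss q a" "in_poss q a \<Longrightarrow> subt_at s (p @ q) = subt_at a q"
    "replace_at s (p @ q) b = replace_at s p (replace_at a q b)"
  using assms by (simp_all add: in_poss_append subt_at_append replace_at_append)

lemma vars_term_subt_at: "in_poss q t \<Longrightarrow> vars_term (subt_at t q) \<subseteq> vars_term t"
  by (induction q arbitrary: t) (fastforce split: term.splits)+

lemma vars_term_in_poss: "x \<in> vars_term t \<Longrightarrow> \<exists>p. in_poss p t \<and> subt_at t p = Var x"
proof (induction t)
  case (Var y)
  then show ?case by (intro exI[of _ "[]"]) auto
next
  case (Fun f ts)
  then obtain i where i: "i < length ts" "x \<in> vars_term (ts ! i)"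
    by (auto simp: in_set_conv_nth)
  with Fun.IH[OF nth_mem[OF i(1)] i(2)] obtain p
    where "in_poss p (ts ! i) \<and> subt_at (ts ! i) p = Var x" by auto
  with i show ?case by (intro exI[of _ "i # p"]) auto
qed

lemma in_poss_subst_cases:
  assumes "in_poss q (l \<cdot> \<theta>)"
  obtains "fun_poss q l"
    | q1 q2 x where "q = q1 @ q2" "in_poss q1 l" "subt_at l q1 = Var x" "in_poss q2 (\<theta> x)"
  using assms
proof (induction l arbitrary: q thesis)
  case (Var x)
  then show ?case by force
next
  case (Fun f ts)
  show ?case
  proof (cases q)
    case Nil
    then show ?thesis using Fun.prems(1) by (simp add: fun_poss_def)
  next
    case (Cons i q')
    with Fun.prems(3) have i: "i < length ts" "in_poss q' (ts ! i \<cdot> \<theta>)" by auto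
    show ?thesis
    proof (rule Fun.IH[OF nth_mem[OF i(1)] _ _ i(2)])
      assume "fun_poss q' (ts ! i)"
      then show ?thesis using Fun.prems(1) i Cons by (auto simp: fun_poss_def)
    next
      fix q1 q2 x
      assume "q' = q1 @ q2" "in_poss q1 (ts ! i)" "subt_at (ts ! i) q1 = Var x" "in_poss q2 (\<theta> x)"
      then show ?thesis using Fun.prems(2)[of "i # q1" q2 x] i Cons by auto
    qed
  qed
qed

definition parallel_pos :: "pos \<Rightarrow> pos \<Rightarrow> bool" where
  "parallel_pos p q \<longleftrightarrow> (\<nexists>r. q = p @ r) \<and> (\<nexists>r. p = q @ r)"

lemma pos_cases:
  fixes p q :: pos
  obtains (below) r where "q = p @ r" | (above) r where "p = q @ r" | (parallel) "parallel_pos p q"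
  unfolding parallel_pos_def by blast

lemma parallel_pos_sym: "parallel_pos p q \<Longrightarrow> parallel_pos q p"
  by (auto simp: parallel_pos_def)

lemma replace_at_parallel:
  "parallel_pos p q \<Longrightarrow> in_poss p t \<Longrightarrow> in_poss q t \<Longrightarrow>
   in_poss q (replace_at t p u) \<and> subt_at (replace_at t p u) q = subt_at t q \<and>
   replace_at (replace_at t p u) q w = replace_at (replace_at t q w) p u"
proof (induction p arbitrary: q t)
  case Nil
  then show ?case by (simp add: parallel_pos_def)
next
  case (Cons i p)
  then obtain j q' where q: "q = j # q'" by (cases q) (auto simp: parallel_pos_def)
  from Cons.prems obtain f ts where t: "t = Fun f ts" by (cases t) auto
  show ?case
  proof (cases "i = j")
    case True
    with Cons.prems q t have "parallel_pos p q'" by (simp add: parallel_pos_def)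
    with Cons.IH[of q' "ts ! i"] Cons.prems q t True show ?thesis by auto
  next
    case False
    with Cons.prems q t show ?thesis by (auto simp: list_update_swap)
  qed
qed

section \<open>Rewrite steps\<close>

lemma rstepI:
  "(l, r) \<in> E \<Longrightarrow> in_poss p s \<Longrightarrow> subt_at s p = l \<cdot> \<sigma> \<Longrightarrow> t = replace_at s p (r \<cdot> \<sigma>) \<Longrightarrow>
   (s, t) \<in> rstep E"
  unfolding rstep_def by blast

lemma rstepE:
  assumes "(s, t) \<in> rstep E"
  obtains l r p \<sigma> where "(l, r) \<in> E" "in_poss p s" "subt_at s p = l \<cdot> \<sigma>"
    "t = replace_at s p (r \<cdot> \<sigma>)"
  using assms unfolding rstep_def by blast

lemma rstep_mono: "E \<subseteq> F \<Longrightarrow> rstep E \<subseteq> rstep F"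
  unfolding rstep_def by blast

lemma rstep_subst: "(a, b) \<in> rstep E \<Longrightarrow> (a \<cdot> \<delta>, b \<cdot> \<delta>) \<in> rstep E"
proof (elim rstepE)
  fix l r p \<sigma>
  assume "(l, r) \<in> E" "in_poss p a" "subt_at a p = l \<cdot> \<sigma>" "b = replace_at a p (r \<cdot> \<sigma>)"
  then show ?thesis
    by (intro rstepI[of l r E p _ "\<lambda>x. \<sigma> x \<cdot> \<delta>"])
      (auto simp: in_poss_subst subt_at_subst replace_at_subst subst_subst)
qed

lemma rstep_replace_at:
  "(a, b) \<in> rstep E \<Longrightarrow> in_poss p s \<Longrightarrow> (replace_at s p a, replace_at s p b) \<in> rstep E"
proof (elim rstepE)
  fix l r q \<sigma>
  assume "(l, r) \<in> E" "in_poss q a" "subt_at a q = l \<cdot> \<sigma>" "b = replace_at a q (r \<cdot> \<sigma>)"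
    and "in_poss p s"
  then show ?thesis
    by (intro rstepI[of l r E "p @ q" _ \<sigma>])
      (auto simp: in_poss_append subt_at_append replace_at_append in_poss_replace_at
        subt_at_replace_at replace_at_replace_at)
qed

lemma rstep_replace_at_rule:
  "(l, r) \<in> E \<Longrightarrow> in_poss p s \<Longrightarrow> (replace_at s p (l \<cdot> \<theta>), replace_at s p (r \<cdot> \<theta>)) \<in> rstep E"
  by (rule rstep_replace_at[OF rstepI[of l r E "[]"]]) auto

lemma rsteps_replace_at:
  "(a, b) \<in> (rstep E)\<^sup>* \<Longrightarrow> in_poss p s \<Longrightarrow> (replace_at s p a, replace_at s p b) \<in> (rstep E)\<^sup>*"
proof (induction rule: rtrancl_induct)
  case (step b c)
  then have "(replace_at (replace_at s p b) p b, replace_at (replace_at s p b) p c) \<in> rstep E"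
    by (simp add: rstep_replace_at in_poss_replace_at)
  with step show ?case by (simp add: replace_at_replace_at)
qed simp

lemma rsteps_Fun_args:
  "length ts = length us \<Longrightarrow> (\<And>i. i < length ts \<Longrightarrow> (ts ! i, us ! i) \<in> (rstep E)\<^sup>*) \<Longrightarrow>
   (Fun f (ts0 @ ts), Fun f (ts0 @ us)) \<in> (rstep E)\<^sup>*"
proof (induction ts arbitrary: us ts0)
  case (Cons t ts)
  then obtain u us' where us: "us = u # us'" by (cases us) auto
  have "(t, u) \<in> (rstep E)\<^sup>*" using Cons.prems(2)[of 0] us by simp
  from rsteps_replace_at[OF this, of "[length ts0]" "Fun f (ts0 @ t # ts)"]
  have "(Fun f (ts0 @ t # ts), Fun f ((ts0 @ [u]) @ ts)) \<in> (rstep E)\<^sup>*"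
    by (simp add: list_update_append)
  also have "(Fun f ((ts0 @ [u]) @ ts), Fun f ((ts0 @ [u]) @ us')) \<in> (rstep E)\<^sup>*"
  proof (rule Cons.IH)
    show "length ts = length us'" using Cons.prems(1) us by simp
    show "(ts ! i, us' ! i) \<in> (rstep E)\<^sup>*" if "i < length ts" for i
      using Cons.prems(2)[of "Suc i"] that us by simp
  qed
  finally show ?case using us by simp
qed simp

lemma subst_rsteps:
  "(\<And>x. x \<in> vars_term t \<Longrightarrow> (\<sigma> x, \<tau> x) \<in> (rstep E)\<^sup>*) \<Longrightarrow> (t \<cdot> \<sigma>, t \<cdot> \<tau>) \<in> (rstep E)\<^sup>*"
proof (induction t)
  case (Fun f ts)
  then show ?case
    using rsteps_Fun_args[of "map (\<lambda>t. t \<cdot> \<sigma>) ts" "map (\<lambda>t. t \<cdot> \<tau>) ts" E f "[]"]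
    by simp (meson nth_mem)
qed simp

lemma rstep_converse: "(s, t) \<in> rstep E \<Longrightarrow> (t, s) \<in> rstep {(r, l). (l, r) \<in> E}"
proof (elim rstepE)
  fix l r p \<sigma>
  assume lr: "(l, r) \<in> E" and p: "in_poss p s" and sp: "subt_at s p = l \<cdot> \<sigma>"
    and t: "t = replace_at s p (r \<cdot> \<sigma>)"
  have "replace_at t p (l \<cdot> \<sigma>) = s"
    using replace_at_subt_at[OF p] by (simp add: t sp replace_at_replace_at p)
  moreover have "in_poss p t" "subt_at t p = r \<cdot> \<sigma>"
    by (simp_all add: t p in_poss_replace_at subt_at_replace_at)
  ultimately show ?thesis
    using lr by (intro rstepI[of r l _ p _ \<sigma>]) auto
qed

lemma sym_step_eq_rstep_sym_es: "sym_step B = rstep (sym_es B)"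
proof -
  have conv: "{(r, l). (l, r) \<in> B} \<subseteq> sym_es B" "{(r, l). (l, r) \<in> {(r, l). (l, r) \<in> B}} = B"
    by (auto simp: sym_es_def)
  have "rstep (sym_es B) = rstep B \<union> rstep {(r, l). (l, r) \<in> B}"
    unfolding rstep_def sym_es_def by blast
  moreover have "(rstep B)\<inverse> = rstep {(r, l). (l, r) \<in> B}"
    using rstep_converse[of _ _ B] rstep_converse[of _ _ "{(r, l). (l, r) \<in> B}"]
    unfolding conv(2) by fast
  ultimately show ?thesis by (simp add: sym_step_def)
qed

lemma wf_trs_vars: "wf_trs R \<Longrightarrow> (l, r) \<in> R \<Longrightarrow> vars_term r \<subseteq> vars_term l"
  unfolding wf_trs_def by auto

lemma sym_es_vars: "var_balanced B \<Longrightarrow> (l, r) \<in> sym_es B \<Longrightarrow> vars_term r \<subseteq> vars_term l"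
  unfolding var_balanced_def sym_es_def by auto

lemma joinable_refl: "joinable R t t"
  unfolding joinable_def by blast

lemma joinable_sym: "joinable R t u \<Longrightarrow> joinable R u t"
  unfolding joinable_def by blast

lemma joinable_mod_refl: "joinable_mod R B t t"
  unfolding joinable_mod_def by blast

lemma sym_step_sym: "(a, b) \<in> sym_step E \<Longrightarrow> (b, a) \<in> sym_step E"
  by (auto simp: sym_step_def)

lemma rstep_trancl_replace_at:
  assumes "(a, b) \<in> (rstep E)\<^sup>+" "in_poss p s"
  shows "(replace_at s p a, replace_at s p b) \<in> (rstep E)\<^sup>+"
proof -
  from tranclD[OF assms(1)] obtain c where "(a, c) \<in> rstep E" "(c, b) \<in> (rstep E)\<^sup>*" by blast
  with rstep_replace_at[OF _ assms(2)] rsteps_replace_at[OF _ assms(2)] show ?thesis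
    by (meson rtrancl_into_trancl2)
qed

lemma joinable_replace_at: "joinable R a b \<Longrightarrow> in_poss p s \<Longrightarrow> joinable R (replace_at s p a) (replace_at s p b)"
  unfolding joinable_def using rsteps_replace_at by blast

lemma joinable_mod_replace_at:
  "joinable_mod R B a b \<Longrightarrow> in_poss p s \<Longrightarrow> joinable_mod R B (replace_at s p a) (replace_at s p b)"
  unfolding joinable_mod_def sym_step_eq_rstep_sym_es using rsteps_replace_at by blast

lemma sym_step_replace_at:
  "(a, b) \<in> sym_step E \<Longrightarrow> in_poss p s \<Longrightarrow> (replace_at s p a, replace_at s p b) \<in> sym_step E"
  unfolding sym_step_def using rstep_replace_at by blast

lemma replace_at_var_subst_rsteps:
  assumes "in_poss q l" "subt_at l q = Var x" "\<And>y. (\<theta> y, \<theta>' y) \<in> (rstep E)\<^sup>*"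
  shows "(replace_at (l \<cdot> \<theta>) q (\<theta>' x), l \<cdot> \<theta>') \<in> (rstep E)\<^sup>*"
  using assms(1,2)
proof (induction l arbitrary: q)
  case (Var y)
  then show ?case by simp
next
  case (Fun f ts)
  then obtain i q' where q: "q = i # q'" "i < length ts" "in_poss q' (ts ! i)"
    "subt_at (ts ! i) q' = Var x"
    by (cases q) auto
  have "(Fun f ([] @ (map (\<lambda>t. t \<cdot> \<theta>) ts)[i := replace_at (ts ! i \<cdot> \<theta>) q' (\<theta>' x)]),
         Fun f ([] @ map (\<lambda>t. t \<cdot> \<theta>') ts)) \<in> (rstep E)\<^sup>*"
    using q Fun.IH[of "ts ! i" q']
    by (intro rsteps_Fun_args) (auto simp: nth_list_update intro: subst_rsteps assms(3))
  with q show ?case by simp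
qed

lemma linear_term_Fun_arg: "linear_term (Fun f ts) \<Longrightarrow> i < length ts \<Longrightarrow> linear_term (ts ! i)"
  unfolding linear_term_def
proof (intro allI impI)
  fix p q x
  assume lin: "\<forall>p q x. in_poss p (Fun f ts) \<and> in_poss q (Fun f ts) \<and>
      subt_at (Fun f ts) p = Var x \<and> subt_at (Fun f ts) q = Var x \<longrightarrow> p = q"
    and "i < length ts"
    and "in_poss p (ts ! i) \<and> in_poss q (ts ! i) \<and> subt_at (ts ! i) p = Var x \<and> subt_at (ts ! i) q = Var x"
  then have "in_poss (i # p) (Fun f ts) \<and> in_poss (i # q) (Fun f ts) \<and>
      subt_at (Fun f ts) (i # p) = Var x \<and> subt_at (Fun f ts) (i # q) = Var x"
    by simp
  then have "i # p = i # q" using lin by (elim allE[of _ "i # p"] allE[of _ "i # q"] allE[of _ x] mp)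
  then show "p = q" by simp
qed

lemma linear_term_Fun_vars_disjoint:
  assumes "linear_term (Fun f ts)" "i < length ts" "j < length ts" "i \<noteq> j"
    and "in_poss q (ts ! i)" "subt_at (ts ! i) q = Var x"
  shows "x \<notin> vars_term (ts ! j)"
proof
  assume "x \<in> vars_term (ts ! j)"
  from vars_term_in_poss[OF this] obtain p where "in_poss p (ts ! j)" "subt_at (ts ! j) p = Var x"
    by blast
  with assms(2-6) have "in_poss (i # q) (Fun f ts) \<and> in_poss (j # p) (Fun f ts) \<and>
      subt_at (Fun f ts) (i # q) = Var x \<and> subt_at (Fun f ts) (j # p) = Var x"
    by simp
  with assms(1) have "i # q = j # p"
    unfolding linear_term_def by (elim allE[of _ "i # q"] allE[of _ "j # p"] allE[of _ x] mp)
  with assms(4) show False by simp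
qed

lemma linear_replace_at_var:
  assumes "linear_term l" "in_poss q l" "subt_at l q = Var x"
  shows "replace_at (l \<cdot> \<theta>) q u = l \<cdot> \<theta>(x := u)"
  using assms
proof (induction l arbitrary: q)
  case (Var y)
  then show ?case by simp
next
  case (Fun f ts)
  then obtain i q' where q: "q = i # q'" "i < length ts" "in_poss q' (ts ! i)"
    "subt_at (ts ! i) q' = Var x"
    by (cases q) auto
  let ?\<theta>' = "\<theta>(x := u)"
  have other: "ts ! j \<cdot> \<theta> = ts ! j \<cdot> ?\<theta>'" if "j < length ts" "j \<noteq> i" for j
    using linear_term_Fun_vars_disjoint[OF Fun.prems(1) q(2) that(1) that(2)[symmetric] q(3,4)]
    by (intro term_subst_eq) auto
  have arg: "replace_at (ts ! i \<cdot> \<theta>) q' u = ts ! i \<cdot> ?\<theta>'"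
    using Fun.IH[OF nth_mem[OF q(2)] linear_term_Fun_arg[OF Fun.prems(1) q(2)] q(3,4)] .
  have args: "(map (\<lambda>t. t \<cdot> \<theta>) ts)[i := replace_at (ts ! i \<cdot> \<theta>) q' u] = map (\<lambda>t. t \<cdot> ?\<theta>') ts"
  proof (rule nth_equalityI)
    fix j
    assume "j < length ((map (\<lambda>t. t \<cdot> \<theta>) ts)[i := replace_at (ts ! i \<cdot> \<theta>) q' u])"
    then show "(map (\<lambda>t. t \<cdot> \<theta>) ts)[i := replace_at (ts ! i \<cdot> \<theta>) q' u] ! j = map (\<lambda>t. t \<cdot> ?\<theta>') ts ! j"
      using arg other[of j] by (cases "j = i") (simp_all add: nth_list_update)
  qed simp
  have "replace_at (Fun f ts \<cdot> \<theta>) q u = Fun f ((map (\<lambda>t. t \<cdot> \<theta>) ts)[i := replace_at (ts ! i \<cdot> \<theta>) q' u])"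
    using q(1,2) by simp
  then show ?case unfolding args subst_apply.simps(2) .
qed

section \<open>Normal forms and innermost redexes\<close>

definition proper_subterms_NF :: "('f, 'v) rule set \<Rightarrow> ('f, 'v) term \<Rightarrow> bool" where
  "proper_subterms_NF R t \<longleftrightarrow> (\<forall>q. in_poss q t \<and> q \<noteq> [] \<longrightarrow> subt_at t q \<in> NF R)"

lemma NF_subst: "a \<cdot> \<delta> \<in> NF R \<Longrightarrow> a \<in> NF R"
  unfolding NF_def using rstep_subst by blast

lemma proper_subterms_NF_subst: "proper_subterms_NF R (t \<cdot> \<delta>) \<Longrightarrow> proper_subterms_NF R t"
  unfolding proper_subterms_NF_def
  using NF_subst in_poss_subst subt_at_subst by metis

lemma NF_subt_at:
  assumes "t \<in> NF R" "in_poss q t"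
  shows "subt_at t q \<in> NF R"
proof -
  have "(t, replace_at t q u) \<in> rstep R" if "(subt_at t q, u) \<in> rstep R" for u
    using rstep_replace_at[OF that assms(2)] by (simp add: replace_at_subt_at assms(2))
  with assms(1) show ?thesis by (auto simp: NF_def)
qed

lemma root_redex:
  assumes "t \<notin> NF R" "proper_subterms_NF R t"
  obtains l r \<theta> where "(l, r) \<in> R" "t = l \<cdot> \<theta>"
proof -
  from assms(1) obtain u where "(t, u) \<in> rstep R" by (auto simp: NF_def)
  then obtain l r p \<theta> where lr: "(l, r) \<in> R" "in_poss p t" "subt_at t p = l \<cdot> \<theta>"
    by (auto elim: rstepE)
  have "subt_at t p \<notin> NF R"
    using rstepI[OF lr(1), of "[]" "subt_at t p" \<theta>] lr(3) by (auto simp: NF_def)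
  with assms(2) lr(2) have "p = []" by (auto simp: proper_subterms_NF_def)
  with lr that show ?thesis by simp
qed

lemma NF_imp_proper_subterms_NF: "t \<in> NF R \<Longrightarrow> proper_subterms_NF R t"
  by (simp add: proper_subterms_NF_def NF_subt_at)

lemma rule_instance_not_NF: "(l, r) \<in> R \<Longrightarrow> l \<cdot> \<theta> \<notin> NF R"
  using rstepI[of l r R "[]" "l \<cdot> \<theta>" \<theta>] by (auto simp: NF_def)

lemma innermost_redex:
  assumes "t \<notin> NF R"
  obtains q l r \<theta> where "in_poss q t" "(l, r) \<in> R" "subt_at t q = l \<cdot> \<theta>"
    "proper_subterms_NF R (l \<cdot> \<theta>)"
  using assms
proof (induction t arbitrary: thesis)
  case (Var x)
  then obtain l r \<theta> where "(l, r) \<in> R" "Var x = l \<cdot> \<theta>"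
    by (metis root_redex in_poss_Var proper_subterms_NF_def)
  moreover from this(2) have "proper_subterms_NF R (l \<cdot> \<theta>)"
    unfolding proper_subterms_NF_def by (metis in_poss_Var)
  ultimately show ?case using Var.prems(1)[of "[]"] by simp
next
  case (Fun f ts)
  show ?case
  proof (cases "\<forall>t \<in> set ts. t \<in> NF R")
    case True
    then have prime: "proper_subterms_NF R (Fun f ts)"
      using NF_subt_at nth_mem by (fastforce simp: proper_subterms_NF_def neq_Nil_conv)
    with Fun.prems(2) obtain l r \<theta> where "(l, r) \<in> R" "Fun f ts = l \<cdot> \<theta>"
      by (rule root_redex)
    with prime show ?thesis using Fun.prems(1)[of "[]"] by simp
  next
    case False
    then obtain i where i: "i < length ts" "ts ! i \<notin> NF R" by (auto simp: in_set_conv_nth)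
    show ?thesis
    proof (rule Fun.IH[OF nth_mem[OF i(1)] _ i(2)])
      fix q l r \<theta>
      assume "in_poss q (ts ! i)" "(l, r) \<in> R" "subt_at (ts ! i) q = l \<cdot> \<theta>"
        "proper_subterms_NF R (l \<cdot> \<theta>)"
      with i show ?thesis using Fun.prems(1)[of "i # q"] by simp
    qed
  qed
qed

section \<open>Most general unifiers\<close>

lemma size_subst_var: "x \<in> vars_term t \<Longrightarrow> size (\<tau> x) \<le> size (t \<cdot> \<tau>)"
proof (induction t)
  case (Fun f ts)
  then obtain u where u: "u \<in> set ts" "x \<in> vars_term u" by auto
  with Fun.IH have "size (\<tau> x) \<le> size (u \<cdot> \<tau>)" by blast
  with u show ?case
    using size_list_estimation'[OF u(1), of "size (\<tau> x)" "size \<circ> (\<lambda>t. t \<cdot> \<tau>)"] by simp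
qed simp

lemma occurs_check: "x \<in> vars_term t \<Longrightarrow> t \<noteq> Var x \<Longrightarrow> \<tau> x \<noteq> t \<cdot> \<tau>"
proof (cases t)
  case (Fun f ts)
  assume "x \<in> vars_term t"
  with Fun obtain u where u: "u \<in> set ts" "x \<in> vars_term u" by auto
  then have "size (\<tau> x) < size (t \<cdot> \<tau>)"
    using Fun size_subst_var[OF u(2), of \<tau>]
      size_list_estimation'[OF u(1), of "size (\<tau> x)" "size \<circ> (\<lambda>t. t \<cdot> \<tau>)"] by simp
  then show ?thesis by auto
qed simp

type_synonym ('f, 'v) equations = "(('f, 'v) term \<times> ('f, 'v) term) list"

definition unifies_eqs :: "('v \<Rightarrow> ('f, 'v) term) \<Rightarrow> ('f, 'v) equations \<Rightarrow> bool" where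
  "unifies_eqs \<tau> E \<longleftrightarrow> (\<forall>(a, b) \<in> set E. a \<cdot> \<tau> = b \<cdot> \<tau>)"

definition is_mgu_eqs :: "('v \<Rightarrow> ('f, 'v) term) \<Rightarrow> ('f, 'v) equations \<Rightarrow> bool" where
  "is_mgu_eqs \<sigma> E \<longleftrightarrow> unifies_eqs \<sigma> E \<and> (\<forall>\<tau>. unifies_eqs \<tau> E \<longrightarrow> (\<exists>\<delta>. \<forall>x. \<tau> x = \<sigma> x \<cdot> \<delta>))"

definition vars_eqs :: "('f, 'v) equations \<Rightarrow> 'v set" where
  "vars_eqs E = (\<Union>(a, b) \<in> set E. vars_term a \<union> vars_term b)"

definition size_eqs :: "('f, 'v) equations \<Rightarrow> nat" where
  "size_eqs E = (\<Sum>(a, b) \<leftarrow> E. size a + size b + 1)"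

lemma finite_vars_eqs: "finite (vars_eqs E)"
  by (auto simp: vars_eqs_def finite_vars_term)

lemma zip_eqs:
  assumes "length as = length bs"
  shows "vars_eqs (zip as bs) = (\<Union>a \<in> set as. vars_term a) \<union> (\<Union>b \<in> set bs. vars_term b)"
    and "size_eqs (zip as bs) = sum_list (map size as) + sum_list (map size bs) + length as"
    and "unifies_eqs \<tau> (zip as bs) \<longleftrightarrow> map (\<lambda>t. t \<cdot> \<tau>) as = map (\<lambda>t. t \<cdot> \<tau>) bs"
  using assms
  by (induction as bs rule: list_induct2) (auto simp: vars_eqs_def size_eqs_def unifies_eqs_def)

lemma is_mgu_eqs_Nil: "is_mgu_eqs Var []"
  by (simp add: is_mgu_eqs_def unifies_eqs_def) blast

lemma is_mgu_eqs_Cons_trivial: "is_mgu_eqs \<sigma> E \<Longrightarrow> is_mgu_eqs \<sigma> ((a, a) # E)"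
  by (simp add: is_mgu_eqs_def unifies_eqs_def)

lemma unifies_eqs_Cons_Fun:
  "length as = length bs \<Longrightarrow>
   unifies_eqs \<tau> ((Fun f as, Fun f bs) # E) \<longleftrightarrow> unifies_eqs \<tau> (zip as bs @ E)"
  using zip_eqs(3)[of as bs \<tau>] by (auto simp: unifies_eqs_def)

lemma is_mgu_eqs_Cons_decompose:
  "length as = length bs \<Longrightarrow> is_mgu_eqs \<sigma> (zip as bs @ E) \<Longrightarrow>
   is_mgu_eqs \<sigma> ((Fun f as, Fun f bs) # E)"
  by (simp add: is_mgu_eqs_def unifies_eqs_Cons_Fun)

lemma unifies_eqs_instantiate:
  assumes "\<tau> x = t \<cdot> \<tau>" "unifies_eqs \<tau> E"
  shows "unifies_eqs \<tau> (map (\<lambda>(c, d). (c \<cdot> Var(x := t), d \<cdot> Var(x := t))) E)"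
proof -
  have "c \<cdot> Var(x := t) \<cdot> \<tau> = c \<cdot> \<tau>" for c
    unfolding subst_subst using assms(1) by (intro term_subst_eq) auto
  with assms(2) show ?thesis by (auto simp: unifies_eqs_def)
qed

lemma is_mgu_eqs_Cons_eliminate:
  assumes x: "x \<notin> vars_term t" and ab: "(a, b) \<in> {(Var x, t), (t, Var x)}"
    and mgu: "is_mgu_eqs \<sigma> (map (\<lambda>(c, d). (c \<cdot> Var(x := t), d \<cdot> Var(x := t))) E)"
  shows "is_mgu_eqs (\<lambda>y. (Var(x := t)) y \<cdot> \<sigma>) ((a, b) # E)"
proof -
  let ?\<rho> = "Var(x := t)"
  define \<sigma>' where "\<sigma>' = (\<lambda>y. ?\<rho> y \<cdot> \<sigma>)"
  have comp: "c \<cdot> \<sigma>' = c \<cdot> ?\<rho> \<cdot> \<sigma>" for c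
    by (simp add: subst_subst \<sigma>'_def)
  have "t \<cdot> ?\<rho> = t"
    using x by (subst term_subst_eq[of t _ Var]) auto
  then have "t \<cdot> \<sigma>' = Var x \<cdot> \<sigma>'"
    unfolding comp by simp
  with ab have "a \<cdot> \<sigma>' = b \<cdot> \<sigma>'" by auto
  moreover have "unifies_eqs \<sigma>' E"
    using mgu by (fastforce simp: is_mgu_eqs_def unifies_eqs_def comp)
  moreover have "\<exists>\<delta>. \<forall>y. \<tau> y = \<sigma>' y \<cdot> \<delta>" if u: "unifies_eqs \<tau> ((a, b) # E)" for \<tau>
  proof -
    have \<tau>x: "\<tau> x = t \<cdot> \<tau>" using u ab by (auto simp: unifies_eqs_def)
    then have \<rho>\<tau>: "?\<rho> y \<cdot> \<tau> = \<tau> y" for y by simp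
    from u have "unifies_eqs \<tau> E" by (simp add: unifies_eqs_def)
    with mgu unifies_eqs_instantiate[OF \<tau>x this] obtain \<delta> where \<delta>: "\<forall>y. \<tau> y = \<sigma> y \<cdot> \<delta>"
      by (auto simp: is_mgu_eqs_def)
    have "\<tau> y = \<sigma>' y \<cdot> \<delta>" for y
      using subst_apply_eq_comp[of \<tau> \<sigma> \<delta> "?\<rho> y"] \<delta> \<rho>\<tau>[of y] by (simp add: \<sigma>'_def)
    then show ?thesis by blast
  qed
  ultimately show ?thesis unfolding \<sigma>'_def[symmetric] by (simp add: is_mgu_eqs_def unifies_eqs_def)
qed

lemma vars_eqs_instantiate:
  "x \<notin> vars_term t \<Longrightarrow>
   vars_eqs (map (\<lambda>(c, d). (c \<cdot> Var(x := t), d \<cdot> Var(x := t))) E) \<subseteq> (vars_eqs E - {x}) \<union> vars_term t"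
  by (auto simp: vars_eqs_def vars_term_subst split: if_splits)

lemma unifiable_cases:
  assumes "a \<cdot> \<tau> = b \<cdot> \<tau>"
  obtains (trivial) "a = b"
    | (eliminate) x t where "x \<notin> vars_term t" "(a, b) \<in> {(Var x, t), (t, Var x)}" "\<tau> x = t \<cdot> \<tau>"
    | (decompose) f as bs where "a = Fun f as" "b = Fun f bs" "length as = length bs"
proof -
  consider "a = b" | x t where "a \<noteq> b" "(a, b) \<in> {(Var x, t), (t, Var x)}"
    | f as g bs where "a = Fun f as" "b = Fun g bs"
    by (cases a; cases b) auto
  then show thesis
  proof cases
    case (2 x t)
    then have "\<tau> x = t \<cdot> \<tau>" using assms by auto
    moreover have "x \<notin> vars_term t" using occurs_check[of x t \<tau>] 2 calculation by auto
    ultimately show thesis using eliminate 2(2) by blast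
  next
    case (3 f as g bs)
    with assms have "f = g" "length as = length bs"
      using map_eq_imp_length_eq by auto
    with 3 show thesis using decompose by simp
  qed (rule trivial)
qed

lemma mgu_eqs_exists:
  fixes E :: "('f, 'v) equations"
  shows "unifies_eqs \<tau> E \<Longrightarrow> \<exists>\<sigma>. is_mgu_eqs \<sigma> E"
proof (induction E arbitrary: \<tau> rule: wf_induct[OF wf_measures[of "[\<lambda>E. card (vars_eqs E), size_eqs]"]])
  case (1 E)
  note IH = 1(1)[rule_format]
  have card_le: "card (vars_eqs E') \<le> card (vars_eqs E)" if "vars_eqs E' \<subseteq> vars_eqs E"
    for E' :: "('f, 'v) equations"
    using that by (simp add: card_mono finite_vars_eqs)
  show ?case
  proof (cases E)
    case Nil
    then show ?thesis using is_mgu_eqs_Nil by blast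
  next
    case (Cons ab E')
    obtain a b where ab: "ab = (a, b)" by fastforce
    have ab_unif: "a \<cdot> \<tau> = b \<cdot> \<tau>" and E'_unif: "unifies_eqs \<tau> E'"
      using 1(2) Cons ab by (auto simp: unifies_eqs_def)
    from ab_unif show ?thesis
    proof (cases rule: unifiable_cases)
      case trivial
      have "vars_eqs E' \<subseteq> vars_eqs E" "size_eqs E' < size_eqs E"
        using Cons ab by (auto simp: vars_eqs_def size_eqs_def)
      with IH[OF _ E'_unif] card_le obtain \<sigma> where "is_mgu_eqs \<sigma> E'"
        by (meson measures_less measures_lesseq)
      then show ?thesis using Cons ab trivial is_mgu_eqs_Cons_trivial by blast
    next
      case (eliminate x t)
      let ?E = "map (\<lambda>(c, d). (c \<cdot> Var(x := t), d \<cdot> Var(x := t))) E'"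
      have "vars_eqs ?E \<subset> vars_eqs E"
        using vars_eqs_instantiate[OF eliminate(1), of E'] eliminate Cons ab by (auto simp: vars_eqs_def)
      then have "card (vars_eqs ?E) < card (vars_eqs E)"
        by (rule psubset_card_mono[OF finite_vars_eqs])
      with IH unifies_eqs_instantiate[OF eliminate(3) E'_unif] obtain \<sigma> where "is_mgu_eqs \<sigma> ?E"
        by (meson measures_less)
      then show ?thesis using is_mgu_eqs_Cons_eliminate[OF eliminate(1,2)] Cons ab by blast
    next
      case (decompose f as bs)
      let ?E = "zip as bs @ E'"
      have "vars_eqs ?E \<subseteq> vars_eqs E" "size_eqs ?E < size_eqs E"
        using zip_eqs(1,2)[OF decompose(3)] Cons ab decompose
        by (auto simp: vars_eqs_def size_eqs_def size_list_conv_sum_list)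
      moreover have "unifies_eqs \<tau> ?E"
        using 1(2) Cons ab decompose unifies_eqs_Cons_Fun by metis
      ultimately obtain \<sigma> where "is_mgu_eqs \<sigma> ?E"
        using IH card_le by (meson measures_less measures_lesseq)
      then show ?thesis using is_mgu_eqs_Cons_decompose[OF decompose(3)] Cons ab decompose by blast
    qed
  qed
qed

lemma is_mgu_exists: "s \<cdot> \<tau> = t \<cdot> \<tau> \<Longrightarrow> \<exists>\<sigma>. is_mgu \<sigma> s t"
  using mgu_eqs_exists[of \<tau> "[(s, t)]"]
  by (auto simp: is_mgu_def is_mgu_eqs_def unifies_eqs_def)

section \<open>Critical pairs\<close>

lemma rename_apart:
  assumes "infinite (UNIV :: 'v set)" "finite (A :: 'v set)" "finite (V :: 'v set)"
  obtains \<pi> where "bij \<pi>" "\<pi> ` A \<inter> V = {}"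
proof -
  have "infinite (UNIV - (A \<union> V))" using assms by auto
  then obtain B where B: "finite B" "card B = card A" "B \<subseteq> UNIV - (A \<union> V)"
    using infinite_arbitrarily_large by blast
  then obtain g where g: "bij_betw g A B" using finite_same_card_bij[OF assms(2) B(1)] by metis
  define \<pi> where "\<pi> x = (if x \<in> A then g x else if x \<in> B then inv_into A g x else x)" for x
  have AB: "A \<inter> B = {}" using B by auto
  have "\<pi> (\<pi> x) = x" for x
  proof -
    consider "x \<in> A" | "x \<in> B" | "x \<notin> A" "x \<notin> B" by blast
    then show ?thesis
    proof cases
      case 1
      then have "g x \<in> B" using g by (auto simp: bij_betw_def)
      then show ?thesis using 1 AB g unfolding \<pi>_def by (auto simp: bij_betw_def)
    next
      case 2
      then have "inv_into A g x \<in> A" using g by (metis bij_betw_def inv_into_into)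
      then show ?thesis using 2 AB g unfolding \<pi>_def by (auto simp: bij_betw_def f_inv_into_f)
    qed (simp add: \<pi>_def)
  qed
  then have "bij \<pi>" by (rule involuntory_imp_bij)
  moreover have "\<pi> ` A \<subseteq> B" using g unfolding \<pi>_def by (auto simp: bij_betw_def)
  ultimately show ?thesis using that B(3) by blast
qed

lemma variant_apart:
  fixes l r :: "('f, 'v) term"
  assumes "infinite (UNIV :: 'v set)" "finite V"
  obtains l' r' \<theta> where "is_variant (l', r') (l, r)" "vars_rule (l', r') \<inter> V = {}"
    "l' \<cdot> \<theta> = l \<cdot> \<sigma>" "r' \<cdot> \<theta> = r \<cdot> \<sigma>" "\<And>y. y \<in> V \<Longrightarrow> \<theta> y = \<tau> y"
proof -
  let ?A = "vars_rule (l, r)"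
  obtain \<pi> where \<pi>: "bij \<pi>" "\<pi> ` ?A \<inter> V = {}"
    using rename_apart[OF assms(1) _ assms(2), of ?A] by (auto simp: vars_rule_def finite_vars_term)
  define \<theta> where "\<theta> y = (if y \<in> \<pi> ` ?A then \<sigma> (inv \<pi> y) else \<tau> y)" for y
  have "t \<cdot> (Var \<circ> \<pi>) \<cdot> \<theta> = t \<cdot> \<sigma>" if "vars_term t \<subseteq> ?A" for t
    unfolding subst_subst using that \<pi>(1) by (intro term_subst_eq) (auto simp: \<theta>_def bij_def)
  then have "l \<cdot> (Var \<circ> \<pi>) \<cdot> \<theta> = l \<cdot> \<sigma>" "r \<cdot> (Var \<circ> \<pi>) \<cdot> \<theta> = r \<cdot> \<sigma>"
    by (auto simp: vars_rule_def)
  moreover have "is_variant (l \<cdot> (Var \<circ> \<pi>), r \<cdot> (Var \<circ> \<pi>)) (l, r)"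
    using \<pi>(1) by (auto simp: is_variant_def)
  moreover have "vars_rule (l \<cdot> (Var \<circ> \<pi>), r \<cdot> (Var \<circ> \<pi>)) \<inter> V = {}"
    using \<pi>(2) by (auto simp: vars_rule_def vars_term_rename)
  moreover have "\<theta> y = \<tau> y" if "y \<in> V" for y
    using that \<pi>(2) by (auto simp: \<theta>_def)
  ultimately show ?thesis using that by blast
qed

lemma is_variant_refl: "is_variant \<rho> \<rho>"
  unfolding is_variant_def by (intro exI[of _ id]) simp

text \<open>This is why overlaps of a rule with a variant of itself at the root are excluded.\<close>
lemma variant_same_instance:
  assumes "is_variant (l', r') (l, r)" "vars_term r \<subseteq> vars_term l" "l' \<cdot> \<theta> = l \<cdot> \<theta>"
  shows "r' \<cdot> \<theta> = r \<cdot> \<theta>"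
proof -
  from assms(1) obtain \<pi> where \<pi>: "l' = l \<cdot> (Var \<circ> \<pi>)" "r' = r \<cdot> (Var \<circ> \<pi>)"
    by (auto simp: is_variant_def)
  have "l \<cdot> (\<lambda>y. (Var \<circ> \<pi>) y \<cdot> \<theta>) = l \<cdot> \<theta>"
    using assms(3) unfolding \<pi>(1) subst_subst .
  then have "(Var \<circ> \<pi>) y \<cdot> \<theta> = \<theta> y" if "y \<in> vars_term l" for y
    using term_subst_eq_rev[OF _ that] by blast
  with assms(2) show ?thesis
    unfolding \<pi>(2) subst_subst by (intro term_subst_eq) auto
qed

lemma overlap_instance_PCP_gen:
  assumes ov: "overlap R1 R2 (l1, r1) q (l2, r2)"
    and unif: "l1 \<cdot> \<theta> = subt_at l2 q \<cdot> \<theta>" and prime: "proper_subterms_NF R (l1 \<cdot> \<theta>)"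
  shows "(replace_at (l2 \<cdot> \<theta>) q (r1 \<cdot> \<theta>), r2 \<cdot> \<theta>) \<in> rstep (PCP_gen R R1 R2)"
proof -
  have q: "in_poss q l2" using ov by (simp add: overlap_def fun_poss_def)
  obtain \<sigma> where mgu: "is_mgu \<sigma> l1 (subt_at l2 q)" using is_mgu_exists[OF unif] by blast
  then obtain \<delta> where \<delta>: "\<And>x. \<theta> x = \<sigma> x \<cdot> \<delta>" using unif by (auto simp: is_mgu_def)
  have "proper_subterms_NF R (l1 \<cdot> \<sigma>)"
    using prime proper_subterms_NF_subst[of R "l1 \<cdot> \<sigma>" \<delta>] by (simp flip: subst_apply_eq_comp[OF \<delta>])
  with ov mgu have "(replace_at (l2 \<cdot> \<sigma>) q (r1 \<cdot> \<sigma>), r2 \<cdot> \<sigma>) \<in> PCP_gen R R1 R2"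
    unfolding PCP_gen_def proper_subterms_NF_def by fastforce
  from rstepI[OF this, of "[]" _ \<delta>] show ?thesis
    by (simp add: replace_at_subst in_poss_subst q flip: subst_apply_eq_comp[OF \<delta>])
qed

lemma critical_peak_PCP_gen:
  fixes R R1 R2 :: "('f, 'v) rule set"
  assumes inf: "infinite (UNIV :: 'v set)"
    and inner: "(l1, r1) \<in> R1" and outer: "(l2, r2) \<in> R2"
    and vars_r2: "vars_term r2 \<subseteq> vars_term l2"
    and q: "fun_poss q l2" and redex: "subt_at (l2 \<cdot> \<theta>2) q = l1 \<cdot> \<theta>1"
    and prime: "proper_subterms_NF R (l1 \<cdot> \<theta>1)"
  shows "replace_at (l2 \<cdot> \<theta>2) q (r1 \<cdot> \<theta>1) = r2 \<cdot> \<theta>2 \<or>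
         (replace_at (l2 \<cdot> \<theta>2) q (r1 \<cdot> \<theta>1), r2 \<cdot> \<theta>2) \<in> rstep (PCP_gen R R1 R2)"
proof -
  have q_poss: "in_poss q l2" using q by (simp add: fun_poss_def)
  have "finite (vars_rule (l2, r2))" by (simp add: vars_rule_def finite_vars_term)
  then obtain l1' r1' \<theta> where variant: "is_variant (l1', r1') (l1, r1)"
    and apart: "vars_rule (l1', r1') \<inter> vars_rule (l2, r2) = {}"
    and l1': "l1' \<cdot> \<theta> = l1 \<cdot> \<theta>1" and r1': "r1' \<cdot> \<theta> = r1 \<cdot> \<theta>1"
    and \<theta>2: "\<And>y. y \<in> vars_rule (l2, r2) \<Longrightarrow> \<theta> y = \<theta>2 y"
    by (rule variant_apart[OF inf, where l=l1 and r=r1 and \<sigma>=\<theta>1 and \<tau>=\<theta>2]) blast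
  have "t \<cdot> \<theta> = t \<cdot> \<theta>2" if "vars_term t \<subseteq> vars_rule (l2, r2)" for t
    using that \<theta>2 by (intro term_subst_eq) blast
  then have l2: "l2 \<cdot> \<theta> = l2 \<cdot> \<theta>2" and r2: "r2 \<cdot> \<theta> = r2 \<cdot> \<theta>2"
    and l2q: "subt_at l2 q \<cdot> \<theta> = subt_at l2 q \<cdot> \<theta>2"
    using vars_term_subt_at[OF q_poss] by (auto simp: vars_rule_def)
  have unif: "l1' \<cdot> \<theta> = subt_at l2 q \<cdot> \<theta>"
    using redex l1' l2q by (simp add: subt_at_subst[OF q_poss])
  show ?thesis
  proof (cases "q = [] \<and> is_variant (l1', r1') (l2, r2)")
    case True
    with unif have "l1' \<cdot> \<theta> = l2 \<cdot> \<theta>" by simp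
    from variant_same_instance[OF conjunct2[OF True] vars_r2 this]
    show ?thesis using True r1' r2 by simp
  next
    case False
    have "overlap R1 R2 (l1', r1') q (l2, r2)"
      unfolding overlap_def fst_conv
    proof (intro conjI)
      show "\<exists>\<rho>. \<rho> \<in> R1 \<and> is_variant (l1', r1') \<rho>" using inner variant by blast
      show "\<exists>\<rho>. \<rho> \<in> R2 \<and> is_variant (l2, r2) \<rho>" using outer is_variant_refl by blast
      show "\<exists>\<sigma>. l1' \<cdot> \<sigma> = subt_at l2 q \<cdot> \<sigma>" using unif by blast
    qed (use apart q False in auto)
    from overlap_instance_PCP_gen[OF this unif] show ?thesis
      using prime l1' r1' l2 r2 by simp
  qed
qed

section \<open>Local peaks\<close>

text \<open>How a prime peak with an outer \<open>E\<close>-step closes: the outer rule applies again after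
  rewriting the substitution, or the peak is an instance of a prime critical pair.\<close>
definition joinable_or_PCP :: "('f, 'v) rule set \<Rightarrow> ('f, 'v) rule set \<Rightarrow>
    ('f, 'v) term \<Rightarrow> ('f, 'v) term \<Rightarrow> bool" where
  "joinable_or_PCP R E a b \<longleftrightarrow>
     (\<exists>w w'. (a, w) \<in> (rstep R)\<^sup>* \<and> (w, w') \<in> (rstep E)\<^sup>= \<and> (b, w') \<in> (rstep R)\<^sup>*) \<or>
     (a, b) \<in> rstep (PCP_gen R R E)"

lemma joinable_or_PCP_replace_at:
  assumes "joinable_or_PCP R E a b" "in_poss p s"
  shows "joinable_or_PCP R E (replace_at s p a) (replace_at s p b)"
proof -
  have "(replace_at s p w, replace_at s p w') \<in> (rstep E)\<^sup>=" if "(w, w') \<in> (rstep E)\<^sup>=" for w w'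
    using that rstep_replace_at[OF _ assms(2)] by auto
  then show ?thesis
    using assms rsteps_replace_at[OF _ assms(2)] rstep_replace_at[OF _ assms(2)]
    unfolding joinable_or_PCP_def by meson
qed

lemma joinable_or_PCP_R:
  "joinable_or_PCP R R a b \<Longrightarrow> joinable R a b \<or> (a, b) \<in> sym_step (PCP R)"
  unfolding joinable_or_PCP_def joinable_def PCP_def sym_step_def
  by (blast intro: rtrancl_into_rtrancl)

lemma joinable_or_PCP_sym_es:
  "joinable_or_PCP R (sym_es B) a b \<Longrightarrow> joinable_mod R B a b \<or> (a, b) \<in> sym_step (PCP_pm R B)"
  unfolding joinable_or_PCP_def joinable_mod_def sym_step_def PCP_pm_def
  using rstep_mono[of "PCP_gen R R (sym_es B)" "PCP_gen R R (sym_es B) \<union> PCP_gen R (sym_es B) R"]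
    sym_step_eq_rstep_sym_es[of B, unfolded sym_step_def]
  by blast

text \<open>Below a variable of the outer rule the peak closes by rewriting every occurrence of that
  variable; otherwise it is a critical peak.\<close>
lemma prime_peak_joinable_or_PCP:
  fixes R E :: "('f, 'v) rule set"
  assumes inf: "infinite (UNIV :: 'v set)"
    and outer: "(lo, ro) \<in> E" and vars_ro: "vars_term ro \<subseteq> vars_term lo"
    and q: "in_poss q (lo \<cdot> \<theta>o)" and redex: "subt_at (lo \<cdot> \<theta>o) q = li \<cdot> \<theta>i"
    and inner: "(li, ri) \<in> R" and prime: "proper_subterms_NF R (li \<cdot> \<theta>i)"
  shows "joinable_or_PCP R E (replace_at (lo \<cdot> \<theta>o) q (ri \<cdot> \<theta>i)) (ro \<cdot> \<theta>o)"
  using q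
proof (cases rule: in_poss_subst_cases)
  case 1
  from critical_peak_PCP_gen[OF inf inner outer vars_ro 1 redex prime] show ?thesis
    unfolding joinable_or_PCP_def by blast
next
  case (2 q1 q2 x)
  define u where "u = replace_at (\<theta>o x) q2 (ri \<cdot> \<theta>i)"
  define \<theta>' where "\<theta>' = \<theta>o(x := u)"
  have x: "subt_at (lo \<cdot> \<theta>o) q1 = \<theta>o x"
    using 2 by (simp add: subt_at_subst)
  have "(\<theta>o x, u) \<in> rstep R"
    using redex 2 x by (intro rstepI[OF inner, of q2 _ \<theta>i]) (simp_all add: subt_at_append in_poss_subst u_def)
  then have steps: "(\<theta>o y, \<theta>' y) \<in> (rstep R)\<^sup>*" for y
    by (cases "y = x") (auto simp: \<theta>'_def)
  have "replace_at (lo \<cdot> \<theta>o) q (ri \<cdot> \<theta>i) = replace_at (lo \<cdot> \<theta>o) q1 (\<theta>' x)"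
    using 2 x by (simp add: replace_at_append in_poss_subst \<theta>'_def u_def)
  also have "(\<dots>, lo \<cdot> \<theta>') \<in> (rstep R)\<^sup>*"
    using replace_at_var_subst_rsteps[OF 2(2,3) steps] .
  finally have "(replace_at (lo \<cdot> \<theta>o) q (ri \<cdot> \<theta>i), lo \<cdot> \<theta>') \<in> (rstep R)\<^sup>*" .
  moreover have "(lo \<cdot> \<theta>', ro \<cdot> \<theta>') \<in> rstep E"
    using rstep_replace_at_rule[OF outer, of "[]" "lo \<cdot> \<theta>'" \<theta>'] by simp
  moreover have "(ro \<cdot> \<theta>o, ro \<cdot> \<theta>') \<in> (rstep R)\<^sup>*"
    using steps by (rule subst_rsteps)
  ultimately show ?thesis unfolding joinable_or_PCP_def by blast
qed

text \<open>An innermost redex \<open>l \<cdot> \<theta>\<close> inside the inner redex yields the intermediate term \<open>v\<close>: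
  both resulting peaks are prime.\<close>
lemma nested_peak:
  fixes R E E' :: "('f, 'v) rule set"
  assumes inf: "infinite (UNIV :: 'v set)"
    and outer: "(lo, ro) \<in> E" and vars_ro: "vars_term ro \<subseteq> vars_term lo"
    and q: "in_poss q (lo \<cdot> \<theta>o)" and redex: "subt_at (lo \<cdot> \<theta>o) q = li \<cdot> \<theta>i"
    and inner: "(li, ri) \<in> E'" and vars_ri: "vars_term ri \<subseteq> vars_term li"
    and not_NF: "li \<cdot> \<theta>i \<notin> NF R"
  obtains v where "(lo \<cdot> \<theta>o, v) \<in> rstep R"
    and "joinable_or_PCP R E' v (replace_at (lo \<cdot> \<theta>o) q (ri \<cdot> \<theta>i))"
    and "joinable_or_PCP R E v (ro \<cdot> \<theta>o)"
proof -
  obtain q' l r \<theta> where q': "in_poss q' (li \<cdot> \<theta>i)"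
    and lr: "(l, r) \<in> R" "subt_at (li \<cdot> \<theta>i) q' = l \<cdot> \<theta>" "proper_subterms_NF R (l \<cdot> \<theta>)"
    using innermost_redex[OF not_NF] by blast
  have qq': "in_poss (q @ q') (lo \<cdot> \<theta>o)" "subt_at (lo \<cdot> \<theta>o) (q @ q') = l \<cdot> \<theta>"
    using nested_pos[OF q redex] q' lr(2) by simp_all
  let ?v = "replace_at (lo \<cdot> \<theta>o) (q @ q') (r \<cdot> \<theta>)"
  show ?thesis
  proof (rule that)
    show "(lo \<cdot> \<theta>o, ?v) \<in> rstep R"
      using qq' lr by (intro rstepI[OF lr(1), of "q @ q'" _ \<theta>]) simp_all
    have "joinable_or_PCP R E' (replace_at (li \<cdot> \<theta>i) q' (r \<cdot> \<theta>)) (ri \<cdot> \<theta>i)"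
      using prime_peak_joinable_or_PCP[OF inf inner vars_ri q' lr(2,1,3)] .
    from joinable_or_PCP_replace_at[OF this q]
    show "joinable_or_PCP R E' ?v (replace_at (lo \<cdot> \<theta>o) q (ri \<cdot> \<theta>i))"
      by (simp add: nested_pos(3)[OF q redex])
    show "joinable_or_PCP R E ?v (ro \<cdot> \<theta>o)"
      using prime_peak_joinable_or_PCP[OF inf outer vars_ro qq' lr(1,3)] .
  qed
qed

lemma rule_peak_nabla:
  fixes R :: "('f, 'v) rule set"
  assumes inf: "infinite (UNIV :: 'v set)" and trs: "wf_trs R"
    and outer: "(lo, ro) \<in> R" and q: "in_poss q (lo \<cdot> \<theta>o)"
    and redex: "subt_at (lo \<cdot> \<theta>o) q = li \<cdot> \<theta>i" and inner: "(li, ri) \<in> R"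
  shows "\<exists>v. nabla R (lo \<cdot> \<theta>o) (ro \<cdot> \<theta>o) v \<and> nabla R (lo \<cdot> \<theta>o) v (replace_at (lo \<cdot> \<theta>o) q (ri \<cdot> \<theta>i))"
proof -
  obtain v where v: "(lo \<cdot> \<theta>o, v) \<in> rstep R"
    and "joinable_or_PCP R R v (replace_at (lo \<cdot> \<theta>o) q (ri \<cdot> \<theta>i))" "joinable_or_PCP R R v (ro \<cdot> \<theta>o)"
    using nested_peak[OF inf outer wf_trs_vars[OF trs outer] q redex inner wf_trs_vars[OF trs inner]
        rule_instance_not_NF[OF inner]] .
  moreover have "(lo \<cdot> \<theta>o, ro \<cdot> \<theta>o) \<in> rstep R" "(lo \<cdot> \<theta>o, replace_at (lo \<cdot> \<theta>o) q (ri \<cdot> \<theta>i)) \<in> rstep R"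
    using rstepI[OF outer, of "[]" _ \<theta>o] rstepI[OF inner q redex] by simp_all
  ultimately show ?thesis
    using joinable_or_PCP_R joinable_sym sym_step_sym unfolding nabla_def by (metis r_into_trancl)
qed

lemma equation_rule_peak_nabla:
  fixes R B :: "('f, 'v) rule set"
  assumes inf: "infinite (UNIV :: 'v set)" and trs: "wf_trs R" and bal: "var_balanced B"
    and outer: "(lo, ro) \<in> sym_es B" and q: "in_poss q (lo \<cdot> \<theta>o)"
    and redex: "subt_at (lo \<cdot> \<theta>o) q = li \<cdot> \<theta>i" and inner: "(li, ri) \<in> R"
  shows "\<exists>v. nabla R (lo \<cdot> \<theta>o) (replace_at (lo \<cdot> \<theta>o) q (ri \<cdot> \<theta>i)) v \<and>
             nabla_tilde R B (lo \<cdot> \<theta>o) v (ro \<cdot> \<theta>o)"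
proof -
  obtain v where v: "(lo \<cdot> \<theta>o, v) \<in> rstep R"
    and "joinable_or_PCP R R v (replace_at (lo \<cdot> \<theta>o) q (ri \<cdot> \<theta>i))"
      "joinable_or_PCP R (sym_es B) v (ro \<cdot> \<theta>o)"
    using nested_peak[OF inf outer sym_es_vars[OF bal outer] q redex inner wf_trs_vars[OF trs inner]
        rule_instance_not_NF[OF inner]] .
  moreover have "(lo \<cdot> \<theta>o, ro \<cdot> \<theta>o) \<in> sym_step B"
    using rstepI[OF outer, of "[]" _ \<theta>o] by (simp add: sym_step_eq_rstep_sym_es)
  moreover have "(lo \<cdot> \<theta>o, replace_at (lo \<cdot> \<theta>o) q (ri \<cdot> \<theta>i)) \<in> rstep R"
    by (rule rstepI[OF inner q redex refl])
  ultimately show ?thesis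
    using joinable_or_PCP_R joinable_or_PCP_sym_es joinable_sym sym_step_sym
    unfolding nabla_def nabla_tilde_def by (metis r_into_trancl r_into_rtrancl)
qed

lemma left_linear_variable_peak:
  assumes ll: "left_linear R" and outer: "(lo, ro) \<in> R"
    and q: "in_poss q lo" and x: "subt_at lo q = Var x" and step: "(\<theta> x, u) \<in> rstep E"
  shows "(replace_at (lo \<cdot> \<theta>) q u, ro \<cdot> \<theta>(x := u)) \<in> rstep R"
    and "(ro \<cdot> \<theta>, ro \<cdot> \<theta>(x := u)) \<in> (rstep E)\<^sup>*"
proof -
  have "linear_term lo" using ll outer by (auto simp: left_linear_def)
  from linear_replace_at_var[OF this q x] show "(replace_at (lo \<cdot> \<theta>) q u, ro \<cdot> \<theta>(x := u)) \<in> rstep R"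
    using rstepI[OF outer, of "[]" _ "\<theta>(x := u)"] by simp
  show "(ro \<cdot> \<theta>, ro \<cdot> \<theta>(x := u)) \<in> (rstep E)\<^sup>*"
    using step by (intro subst_rsteps) auto
qed

text \<open>Below a variable of the rule, the equation step would have to be copied to every occurrence
  of the variable before the rule applies again; left-linearity makes the occurrence unique.\<close>
lemma rule_NF_equation_peak:
  fixes R B :: "('f, 'v) rule set"
  assumes inf: "infinite (UNIV :: 'v set)" and ll: "left_linear R"
    and outer: "(lo, ro) \<in> R" and vars_ro: "vars_term ro \<subseteq> vars_term lo"
    and q: "in_poss q (lo \<cdot> \<theta>o)" and redex: "subt_at (lo \<cdot> \<theta>o) q = lb \<cdot> \<theta>b"
    and inner: "(lb, rb) \<in> sym_es B" and NF: "lb \<cdot> \<theta>b \<in> NF R"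
  shows "joinable_mod R B (ro \<cdot> \<theta>o) (replace_at (lo \<cdot> \<theta>o) q (rb \<cdot> \<theta>b)) \<or>
         (ro \<cdot> \<theta>o, replace_at (lo \<cdot> \<theta>o) q (rb \<cdot> \<theta>b)) \<in> sym_step (PCP_pm R B)"
  using q
proof (cases rule: in_poss_subst_cases)
  case 1
  have "rstep (PCP_gen R (sym_es B) R) \<subseteq> rstep (PCP_pm R B)"
    by (rule rstep_mono) (simp add: PCP_pm_def)
  with critical_peak_PCP_gen[OF inf inner outer vars_ro 1 redex NF_imp_proper_subterms_NF[OF NF]]
  show ?thesis
    using joinable_mod_refl[of R B "ro \<cdot> \<theta>o"] unfolding sym_step_def by auto
next
  case (2 q1 q2 x)
  define u where "u = replace_at (\<theta>o x) q2 (rb \<cdot> \<theta>b)"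
  have x: "subt_at (lo \<cdot> \<theta>o) q1 = \<theta>o x"
    using 2 by (simp add: subt_at_subst)
  have "(\<theta>o x, u) \<in> rstep (sym_es B)"
    using redex 2 x by (intro rstepI[OF inner, of q2 _ \<theta>b]) (simp_all add: subt_at_append in_poss_subst u_def)
  note join = left_linear_variable_peak[where \<theta> = \<theta>o, OF ll outer 2(2,3) this]
  have "replace_at (lo \<cdot> \<theta>o) q (rb \<cdot> \<theta>b) = replace_at (lo \<cdot> \<theta>o) q1 u"
    using 2 x by (simp add: replace_at_append in_poss_subst u_def)
  with join have "joinable_mod R B (ro \<cdot> \<theta>o) (replace_at (lo \<cdot> \<theta>o) q (rb \<cdot> \<theta>b))"
    unfolding joinable_mod_def sym_step_eq_rstep_sym_es
    by (intro exI[of _ "ro \<cdot> \<theta>o"] exI[of _ "ro \<cdot> \<theta>o(x := u)"] conjI) auto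
  then show ?thesis ..
qed

lemma rule_equation_peak_nabla:
  fixes R B :: "('f, 'v) rule set"
  assumes inf: "infinite (UNIV :: 'v set)" and trs: "wf_trs R" and ll: "left_linear R"
    and bal: "var_balanced B"
    and outer: "(lo, ro) \<in> R" and q: "in_poss q (lo \<cdot> \<theta>o)"
    and redex: "subt_at (lo \<cdot> \<theta>o) q = lb \<cdot> \<theta>b" and inner: "(lb, rb) \<in> sym_es B"
  shows "\<exists>v. nabla R (lo \<cdot> \<theta>o) (ro \<cdot> \<theta>o) v \<and>
             nabla_tilde R B (lo \<cdot> \<theta>o) v (replace_at (lo \<cdot> \<theta>o) q (rb \<cdot> \<theta>b))"
proof -
  let ?t = "ro \<cdot> \<theta>o" and ?u = "replace_at (lo \<cdot> \<theta>o) q (rb \<cdot> \<theta>b)"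
  have t: "(lo \<cdot> \<theta>o, ?t) \<in> (rstep R)\<^sup>+"
    using rstepI[OF outer, of "[]" _ \<theta>o] by auto
  have u: "(lo \<cdot> \<theta>o, ?u) \<in> (sym_step B)\<^sup>*"
    using rstepI[OF inner q redex refl] by (auto simp: sym_step_eq_rstep_sym_es)
  show ?thesis
  proof (cases "lb \<cdot> \<theta>b \<in> NF R")
    case True
    from rule_NF_equation_peak[OF inf ll outer wf_trs_vars[OF trs outer] q redex inner True]
    have "nabla_tilde R B (lo \<cdot> \<theta>o) ?t ?u"
      using t u unfolding nabla_tilde_def by blast
    moreover have "nabla R (lo \<cdot> \<theta>o) ?t ?t"
      using t joinable_refl unfolding nabla_def by blast
    ultimately show ?thesis by blast
  next
    case False
    obtain v where v: "(lo \<cdot> \<theta>o, v) \<in> rstep R"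
      and "joinable_or_PCP R (sym_es B) v ?u" "joinable_or_PCP R R v ?t"
      using nested_peak[OF inf outer wf_trs_vars[OF trs outer] q redex inner sym_es_vars[OF bal inner]
          False] .
    then show ?thesis
      using t u joinable_or_PCP_R joinable_or_PCP_sym_es joinable_sym sym_step_sym
      unfolding nabla_def nabla_tilde_def by (metis r_into_trancl)
  qed
qed

lemma nabla_replace_at:
  assumes "nabla R a b c" "in_poss p s" "subt_at s p = a"
  shows "nabla R s (replace_at s p b) (replace_at s p c)"
  using assms rstep_trancl_replace_at[OF _ assms(2)] joinable_replace_at[OF _ assms(2)]
    sym_step_replace_at[OF _ assms(2)] replace_at_subt_at[OF assms(2)]
  unfolding nabla_def by metis

lemma nabla_tilde_replace_at:
  assumes "nabla_tilde R B a b c" "in_poss p s" "subt_at s p = a"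
  shows "nabla_tilde R B s (replace_at s p b) (replace_at s p c)"
  using assms rstep_trancl_replace_at[OF _ assms(2)] joinable_mod_replace_at[OF _ assms(2)]
    sym_step_replace_at[OF _ assms(2)] replace_at_subt_at[OF assms(2)]
    rsteps_replace_at[of _ _ "sym_es B", OF _ assms(2)]
  unfolding nabla_tilde_def sym_step_eq_rstep_sym_es by metis

lemma nabla_sym: "nabla R s t u \<Longrightarrow> nabla R s u t"
  unfolding nabla_def using joinable_sym sym_step_sym by metis

lemma parallel_peak:
  assumes par: "parallel_pos p1 p2" and p1: "in_poss p1 s" and p2: "in_poss p2 s"
    and s1: "subt_at s p1 = l1 \<cdot> \<theta>1" and s2: "subt_at s p2 = l2 \<cdot> \<theta>2"
    and r1: "(l1, r1) \<in> E1" and r2: "(l2, r2) \<in> E2"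
  obtains w where "(replace_at s p1 (r1 \<cdot> \<theta>1), w) \<in> rstep E2" "(replace_at s p2 (r2 \<cdot> \<theta>2), w) \<in> rstep E1"
proof
  note a = replace_at_parallel[OF par p1 p2, of "r1 \<cdot> \<theta>1" "r2 \<cdot> \<theta>2"]
  note b = replace_at_parallel[OF parallel_pos_sym[OF par] p2 p1, of "r2 \<cdot> \<theta>2" "r1 \<cdot> \<theta>1"]
  show "(replace_at s p1 (r1 \<cdot> \<theta>1), replace_at (replace_at s p1 (r1 \<cdot> \<theta>1)) p2 (r2 \<cdot> \<theta>2)) \<in> rstep E2"
    by (rule rstepI[OF r2]) (use a s2 in auto)
  show "(replace_at s p2 (r2 \<cdot> \<theta>2), replace_at (replace_at s p1 (r1 \<cdot> \<theta>1)) p2 (r2 \<cdot> \<theta>2)) \<in> rstep E1"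
    by (rule rstepI[OF r1]) (use a b s1 in auto)
qed

lemma local_peak_nabla:
  fixes R :: "('f, 'v) rule set"
  assumes inf: "infinite (UNIV :: 'v set)" and trs: "wf_trs R"
    and st: "(s, t) \<in> rstep R" and su: "(s, u) \<in> rstep R"
  shows "\<exists>v. nabla R s t v \<and> nabla R s v u"
proof -
  from st obtain l1 r1 p1 \<theta>1 where step_t: "(l1, r1) \<in> R" "in_poss p1 s" "subt_at s p1 = l1 \<cdot> \<theta>1"
    "t = replace_at s p1 (r1 \<cdot> \<theta>1)" by (rule rstepE)
  from su obtain l2 r2 p2 \<theta>2 where step_u: "(l2, r2) \<in> R" "in_poss p2 s" "subt_at s p2 = l2 \<cdot> \<theta>2"
    "u = replace_at s p2 (r2 \<cdot> \<theta>2)" by (rule rstepE)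
  show ?thesis
  proof (cases rule: pos_cases[where p = p1 and q = p2])
    case (below q)
    note pos = nested_pos[OF step_t(2,3)]
    have "in_poss q (l1 \<cdot> \<theta>1)" "subt_at (l1 \<cdot> \<theta>1) q = l2 \<cdot> \<theta>2"
      using pos below step_u by auto
    from rule_peak_nabla[OF inf trs step_t(1) this step_u(1)] show ?thesis
      using nabla_replace_at[OF _ step_t(2,3)] pos(3) below step_t(4) step_u(4) by metis
  next
    case (above q)
    note pos = nested_pos[OF step_u(2,3)]
    have "in_poss q (l2 \<cdot> \<theta>2)" "subt_at (l2 \<cdot> \<theta>2) q = l1 \<cdot> \<theta>1"
      using pos above step_t by auto
    from rule_peak_nabla[OF inf trs step_u(1) this step_t(1)] show ?thesis
      using nabla_replace_at[OF _ step_u(2,3)] nabla_sym pos(3) above step_t(4) step_u(4) by metis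
  next
    case parallel
    then obtain w where "(t, w) \<in> rstep R" "(u, w) \<in> rstep R"
      using parallel_peak[OF parallel step_t(2) step_u(2) step_t(3) step_u(3) step_t(1) step_u(1)]
        step_t(4) step_u(4) by metis
    then have "joinable R t u" unfolding joinable_def by blast
    then show ?thesis using st su joinable_refl unfolding nabla_def by blast
  qed
qed

lemma local_peak_nabla_tilde:
  fixes R B :: "('f, 'v) rule set"
  assumes inf: "infinite (UNIV :: 'v set)" and trs: "wf_trs R" and ll: "left_linear R"
    and bal: "var_balanced B"
    and st: "(s, t) \<in> rstep R" and su: "(s, u) \<in> sym_step B"
  shows "\<exists>v. nabla R s t v \<and> nabla_tilde R B s v u"
proof -
  from st obtain l1 r1 p1 \<theta>1 where step_t: "(l1, r1) \<in> R" "in_poss p1 s" "subt_at s p1 = l1 \<cdot> \<theta>1"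
    "t = replace_at s p1 (r1 \<cdot> \<theta>1)" by (rule rstepE)
  from su[unfolded sym_step_eq_rstep_sym_es] obtain l2 r2 p2 \<theta>2
    where step_u: "(l2, r2) \<in> sym_es B" "in_poss p2 s" "subt_at s p2 = l2 \<cdot> \<theta>2"
      "u = replace_at s p2 (r2 \<cdot> \<theta>2)" by (rule rstepE)
  show ?thesis
  proof (cases rule: pos_cases[where p = p1 and q = p2])
    case (below q)
    note pos = nested_pos[OF step_t(2,3)]
    have "in_poss q (l1 \<cdot> \<theta>1)" "subt_at (l1 \<cdot> \<theta>1) q = l2 \<cdot> \<theta>2"
      using pos below step_u by auto
    from rule_equation_peak_nabla[OF inf trs ll bal step_t(1) this step_u(1)] show ?thesis
      using nabla_replace_at[OF _ step_t(2,3)] nabla_tilde_replace_at[OF _ step_t(2,3)]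
        pos(3) below step_t(4) step_u(4) by metis
  next
    case (above q)
    note pos = nested_pos[OF step_u(2,3)]
    have "in_poss q (l2 \<cdot> \<theta>2)" "subt_at (l2 \<cdot> \<theta>2) q = l1 \<cdot> \<theta>1"
      using pos above step_t by auto
    from equation_rule_peak_nabla[OF inf trs bal step_u(1) this step_t(1)] show ?thesis
      using nabla_replace_at[OF _ step_u(2,3)] nabla_tilde_replace_at[OF _ step_u(2,3)]
        pos(3) above step_t(4) step_u(4) by metis
  next
    case parallel
    then obtain w where "(t, w) \<in> rstep (sym_es B)" "(u, w) \<in> rstep R"
      using parallel_peak[OF parallel step_t(2) step_u(2) step_t(3) step_u(3) step_t(1) step_u(1)]
        step_t(4) step_u(4) by metis
    then have "joinable_mod R B t u"
      unfolding joinable_mod_def sym_step_eq_rstep_sym_es by blast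
    moreover have "nabla R s t t" using st joinable_refl unfolding nabla_def by blast
    ultimately show ?thesis using st su unfolding nabla_tilde_def by blast
  qed
qed

theorem lemma3p15:
  fixes R B :: "('f, 'v) rule set" and s t u :: "('f, 'v) term"
  assumes vars_inf: "infinite (UNIV :: 'v set)"
    and trs: "wf_trs R" and ll: "left_linear R"
    and B: "var_balanced B"
  shows "((s, t) \<in> rstep R \<and> (s, u) \<in> rstep R \<longrightarrow>
            (\<exists>v. nabla R s t v \<and> nabla R s v u))
       \<and> ((s, t) \<in> rstep R \<and> (s, u) \<in> sym_step B \<longrightarrow>
            (\<exists>v. nabla R s t v \<and> nabla_tilde R B s v u))"
proof (intro conjI impI; elim conjE)
  show "\<exists>v. nabla R s t v \<and> nabla R s v u" if "(s, t) \<in> rstep R" "(s, u) \<in> rstep R"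
    using local_peak_nabla[OF vars_inf trs that] .
  show "\<exists>v. nabla R s t v \<and> nabla_tilde R B s v u" if "(s, t) \<in> rstep R" "(s, u) \<in> sym_step B"
    using local_peak_nabla_tilde[OF vars_inf trs ll B that] .
qed

end
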